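(* There is an absolute constant $C>0$ and an algorithm with the following property. Let $S$ be a set of arms with reward distributions supported on $[0,1]$ and means $\theta_1\ge\dots\ge\theta_{|S|}$ (indexing unknown to the algorithm), let $K\ge1$ and $\tau\in(0,1/2]$ be such that $\tau K$ is an integer, $(1-\tau)K\ge1$ and $(1+\tau)K+1\le|S|$, and let $\phi\in(0,1]$, $\delta\in(0,1/2]$. If $\theta_{(1-\tau)K}-\theta_{(1+\tau)K+1}\ge\phi$, then the algorithm, given $S,K,\tau,\phi,\delta$, makes at most $C\frac{|S|}{\phi^2}(\log\frac1\tau+\log\frac1\delta)$ pulls and with probability at least $1-\delta$ outputs a $(2\tau)$-top-$K$ set of arms of $S$.
   Context: Stochastic bandit model: each pull yields an independent sample from the pulled arm's unknown distribution. For $T\subseteq S$ with $|T|=K$, the aggregate regret is $\frac1K(\sum_{i=1}^K\theta_i-\sum_{i\in T}\theta_i)$; $T$ is a $\gamma$-top-$K$ set if $|T|=K$ and its aggregate regret is at most $\gamma$. *)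

theory Defs
  imports "HOL-Probability.Probability"
begin

datatype bandit_action = Pull nat | Output "nat set"

type_synonym history = "(nat \<times> real) list"

text \<open>Reward-table model of the stochastic bandit: r (i, j) is the reward obtained at the
j-th pull (counting from 0) of arm i.  exec P r n h = Some T means that, starting from
history h, the (deterministic, given its random seed) policy P stops with output T after
at most n further pulls.\<close>

fun exec :: "(history \<Rightarrow> bandit_action) \<Rightarrow> (nat \<times> nat \<Rightarrow> real) \<Rightarrow> nat \<Rightarrow> history
    \<Rightarrow> nat set option" where
  "exec P r 0 h = (case P h of Output T \<Rightarrow> Some T | Pull i \<Rightarrow> None)"
| "exec P r (Suc n) h = (case P h of Output T \<Rightarrow> Some T
     | Pull i \<Rightarrow> exec P r n (h @ [(i, r (i, length (filter (\<lambda>p. fst p = i) h)))]))"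

text \<open>Joint law of the reward table (independent samples; samples of arm i have law D i)
and of the algorithm's internal randomness (an i.i.d. sequence of uniform [0,1] seeds).\<close>

definition bandit_space :: "nat set \<Rightarrow> (nat \<Rightarrow> real measure)
    \<Rightarrow> ((nat \<times> nat \<Rightarrow> real) \<times> (nat \<Rightarrow> real)) measure" where
  "bandit_space S D =
     (\<Pi>\<^sub>M p\<in>S \<times> UNIV. D (fst p)) \<Otimes>\<^sub>M (\<Pi>\<^sub>M k\<in>(UNIV::nat set). uniform_measure lborel {0..1::real})"

definition mean :: "real measure \<Rightarrow> real" where
  "mean M = (\<integral>x. x \<partial>M)"

text \<open>theta_(k): the k-th largest mean (1-indexed) among the arms of S.\<close>

definition kth_mean :: "(nat \<Rightarrow> real) \<Rightarrow> nat set \<Rightarrow> nat \<Rightarrow> real" where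
  "kth_mean \<theta> S k = rev (sort (map \<theta> (sorted_list_of_set S))) ! (k - 1)"

definition aggregate_regret :: "(nat \<Rightarrow> real) \<Rightarrow> nat set \<Rightarrow> nat \<Rightarrow> nat set \<Rightarrow> real" where
  "aggregate_regret \<theta> S K T =
     (1 / real K) * ((\<Sum>k = 1..K. kth_mean \<theta> S k) - (\<Sum>i\<in>T. \<theta> i))"

definition top_K_set :: "(nat \<Rightarrow> real) \<Rightarrow> nat set \<Rightarrow> nat \<Rightarrow> real \<Rightarrow> nat set \<Rightarrow> bool" where
  "top_K_set \<theta> S K \<gamma> T \<longleftrightarrow> T \<subseteq> S \<and> card T = K \<and> aggregate_regret \<theta> S K T \<le> \<gamma>"

end

theory Submission
  imports Defs "HOL-Combinatorics.Permutations"
begin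

text \<open>Let \<open>t = \<tau>K\<close>. Call an arm good if its mean is at least \<open>\<theta>\<^sub>(K-t)\<close> and bad if it is at
  most \<open>\<theta>\<^sub>(K+t+1)\<close>; the two groups are \<open>\<phi>\<close> apart, so a good arm can lose a comparison against a
  bad one only if one of them is misestimated by \<open>\<phi>/2\<close>. By Hoeffding, each such misestimate in
  halving round \<open>w\<close> has probability at most \<open>\<tau>\<delta>/2^(2w+8)\<close>, and Markov's inequality for the
  number of misestimates shows that, except with probability \<open>\<delta>\<close>: in every round fewer bad arms
  are overestimated than there are places to spare, at most \<open>t\<close> (round, good arm) pairs are
  underestimated, and at most \<open>t\<close> bad arms are overestimated in the last round. Then the output
  misses at most \<open>t\<close> good arms or contains at most \<open>t\<close> bad ones, so it differs from a true
  top-\<open>K\<close> set in at most \<open>2t\<close> arms, each costing at most \<open>1\<close>: the regret is at most \<open>2t/K = 2\<tau>\<close>.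
  The number of arms halves from round to round while the sample size grows only linearly in
  \<open>w\<close>, so the total number of pulls is a geometric sum of order
  \<open>|S|/\<phi>\<^sup>2 (log 1/\<tau> + log 1/\<delta>)\<close>.\<close>

section \<open>Selecting the top elements by value\<close>

definition precedes :: "('a \<Rightarrow> real) \<Rightarrow> 'a::linorder \<Rightarrow> 'a \<Rightarrow> bool" where
  "precedes v j i \<longleftrightarrow> v i < v j \<or> (v j = v i \<and> j < i)"

definition rank_in :: "'a::linorder set \<Rightarrow> ('a \<Rightarrow> real) \<Rightarrow> 'a \<Rightarrow> nat" where
  "rank_in Z v i = card {j\<in>Z. precedes v j i}"

definition top_by :: "'a::linorder set \<Rightarrow> ('a \<Rightarrow> real) \<Rightarrow> nat \<Rightarrow> 'a set" where
  "top_by Z v k = {i\<in>Z. rank_in Z v i < k}"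

lemma top_by_subset: "top_by Z v k \<subseteq> Z"
  by (auto simp: top_by_def)

lemma top_by_cong:
  assumes "\<And>i. i \<in> Z \<Longrightarrow> v i = w i" shows "top_by Z v k = top_by Z w k"
proof -
  have "{j\<in>Z. precedes v j i} = {j\<in>Z. precedes w j i}" if "i \<in> Z" for i
    using assms that unfolding precedes_def by auto
  then show ?thesis unfolding top_by_def rank_in_def by auto
qed

lemma precedes_trans: "precedes v x j \<Longrightarrow> precedes v j i \<Longrightarrow> precedes v x i"
  unfolding precedes_def by auto

lemma precedes_irrefl: "\<not> precedes v i i"
  unfolding precedes_def by auto

lemma rank_in_less:
  assumes "finite Z" "precedes v j i" "j \<in> Z"
  shows "rank_in Z v j < rank_in Z v i"
proof -
  have "{x\<in>Z. precedes v x j} \<subset> {x\<in>Z. precedes v x i}"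
    using precedes_trans[OF _ assms(2)] assms(2,3) precedes_irrefl by blast
  then show ?thesis unfolding rank_in_def using assms(1) by (simp add: psubset_card_mono)
qed

lemma inj_on_rank_in: "finite Z \<Longrightarrow> inj_on (rank_in Z v) Z"
  by (rule inj_onI, rule ccontr) (metis less_irrefl linorder_neq_iff precedes_def rank_in_less)

lemma rank_in_image: "finite Z \<Longrightarrow> rank_in Z v ` Z = {..<card Z}"
proof -
  assume fin: "finite Z"
  have "rank_in Z v i < card Z" if "i \<in> Z" for i
  proof -
    have "{j\<in>Z. precedes v j i} \<subset> Z" using that precedes_irrefl by auto
    then show ?thesis unfolding rank_in_def using fin by (simp add: psubset_card_mono)
  qed
  moreover have "card (rank_in Z v ` Z) = card Z"
    by (rule card_image[OF inj_on_rank_in[OF fin]])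
  ultimately show ?thesis by (simp add: card_subset_eq image_subset_iff)
qed

lemma card_top_by:
  assumes "finite Z" "k \<le> card Z" shows "card (top_by Z v k) = k"
proof -
  have "rank_in Z v ` top_by Z v k = {..<k}"
    using rank_in_image[OF assms(1), of v] assms(2) unfolding top_by_def by auto
  moreover have "inj_on (rank_in Z v) (top_by Z v k)"
    by (rule inj_on_subset[OF inj_on_rank_in[OF assms(1)] top_by_subset])
  ultimately show ?thesis by (metis card_image card_lessThan)
qed

lemma top_by_dominates:
  assumes "finite Z" "i \<in> Z - top_by Z v k" "j \<in> top_by Z v k"
  shows "v i \<le> v j"
proof (rule ccontr)
  assume "\<not> v i \<le> v j"
  then have "rank_in Z v i < rank_in Z v j"
    using rank_in_less[OF assms(1)] assms(2) unfolding precedes_def by auto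
  then show False using assms unfolding top_by_def by auto
qed

lemma top_by_measurable:
  assumes Z: "finite Z" and v: "\<And>i. i \<in> Z \<Longrightarrow> v i \<in> borel_measurable M"
  shows "{x\<in>space M. top_by Z (\<lambda>i. v i x) k = Y} \<in> sets M"
proof -
  define v' where "v' i = (if i \<in> Z then v i else (\<lambda>_. 0::real))" for i
  have [measurable]: "v' i \<in> borel_measurable M" for i using v unfolding v'_def by auto
  have rank: "real (rank_in Z (\<lambda>i. v' i x) i) =
      (\<Sum>j\<in>Z. if v' i x < v' j x \<or> (v' j x = v' i x \<and> j < i) then 1 else 0)" for x i
    unfolding rank_in_def precedes_def using sum.inter_filter[OF Z, of "\<lambda>_. 1::real"] by simp
  have "top_by Z (\<lambda>i. v i x) k = top_by Z (\<lambda>i. v' i x) k" for x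
    by (rule top_by_cong) (simp add: v'_def)
  moreover have "top_by Z (\<lambda>i. v' i x) k = Y \<longleftrightarrow> Y \<subseteq> Z \<and>
      (\<forall>i\<in>Z. i \<in> Y \<longleftrightarrow>
        (\<Sum>j\<in>Z. if v' i x < v' j x \<or> (v' j x = v' i x \<and> j < i) then 1 else 0::real) < real k)" for x
    unfolding top_by_def rank[symmetric] by auto
  moreover have "Measurable.pred M (\<lambda>x. Y \<subseteq> Z \<and> (\<forall>i\<in>Z. i \<in> Y \<longleftrightarrow>
        (\<Sum>j\<in>Z. if v' i x < v' j x \<or> (v' j x = v' i x \<and> j < i) then 1 else 0::real) < real k))"
    using Z by measurable
  ultimately show ?thesis by (simp add: pred_def)
qed

section \<open>Order statistics and aggregate regret\<close>

lemma kth_mean_enumeration: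
  assumes "finite S"
  obtains \<sigma> where "bij_betw \<sigma> {..<card S} S"
    "\<And>p. p < card S \<Longrightarrow> \<theta> (\<sigma> p) = kth_mean \<theta> S (Suc p)"
    "\<And>p q. p \<le> q \<Longrightarrow> q < card S \<Longrightarrow> kth_mean \<theta> S (Suc q) \<le> kth_mean \<theta> S (Suc p)"
proof -
  define xs where "xs = sorted_list_of_set S"
  define ys where "ys = rev (sort (map \<theta> xs))"
  have lxs: "length xs = card S" and lys: "length ys = card S"
    unfolding ys_def xs_def by simp_all
  have kth: "kth_mean \<theta> S (Suc p) = ys ! p" for p unfolding kth_mean_def ys_def xs_def by simp
  have "mset (map \<theta> xs) = mset ys" unfolding ys_def by simp
  from mset_eq_permutation[OF this] obtain p where
    p: "p permutes {..<length ys}" "permute_list p ys = map \<theta> xs" by blast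
  have pinv: "inv p permutes {..<length ys}" using p(1) by (simp add: permutes_inv)
  have ys_nth: "ys ! q = \<theta> (xs ! (inv p q))" if "q < card S" for q
  proof -
    have q': "inv p q < card S" using permutes_in_image[OF pinv] that lys by auto
    have "\<theta> (xs ! (inv p q)) = permute_list p ys ! (inv p q)" using p(2) q' lxs by simp
    also have "\<dots> = ys ! q"
      using permute_list_nth[OF p(1)] q' lys permutes_inverses(1)[OF p(1)] by simp
    finally show ?thesis by simp
  qed
  show ?thesis
  proof
    have "bij_betw (inv p) {..<card S} {..<card S}"
      using permutes_imp_bij[OF pinv] lys by simp
    moreover have "bij_betw ((!) xs) {..<card S} S"
      using bij_betw_nth[of xs "{..<card S}" S] lxs assms unfolding xs_def by simp
    ultimately show "bij_betw (\<lambda>q. xs ! (inv p q)) {..<card S} S"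
      using bij_betw_trans by (fastforce simp: comp_def)
    show "\<theta> (xs ! (inv p q)) = kth_mean \<theta> S (Suc q)" if "q < card S" for q
      using ys_nth[OF that] kth by simp
    show "kth_mean \<theta> S (Suc q) \<le> kth_mean \<theta> S (Suc p')" if "p' \<le> q" "q < card S" for p' q
    proof -
      have "sorted (sort (map \<theta> xs))" by simp
      moreover have "length (sort (map \<theta> xs)) = card S" using lxs by simp
      ultimately show ?thesis
        using sorted_nth_mono[of "sort (map \<theta> xs)" "card S - Suc q" "card S - Suc p'"] that
        unfolding kth ys_def by (simp add: rev_nth)
    qed
  qed
qed

lemma card_kth_mean_le:
  assumes "finite S" "1 \<le> k" "k \<le> card S"
  shows "k \<le> card {i\<in>S. kth_mean \<theta> S k \<le> \<theta> i}"
proof -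
  obtain \<sigma> where \<sigma>: "bij_betw \<sigma> {..<card S} S"
    "\<And>p. p < card S \<Longrightarrow> \<theta> (\<sigma> p) = kth_mean \<theta> S (Suc p)"
    "\<And>p q. p \<le> q \<Longrightarrow> q < card S \<Longrightarrow> kth_mean \<theta> S (Suc q) \<le> kth_mean \<theta> S (Suc p)"
    using kth_mean_enumeration[OF assms(1)] by blast
  have inj: "inj_on \<sigma> {..<k}"
    using \<sigma>(1) assms(3) unfolding bij_betw_def by (meson inj_on_subset lessThan_subset_iff)
  have "\<sigma> ` {..<k} \<subseteq> {i\<in>S. kth_mean \<theta> S k \<le> \<theta> i}"
  proof clarify
    fix p assume "p < k"
    then show "\<sigma> p \<in> S \<and> kth_mean \<theta> S k \<le> \<theta> (\<sigma> p)"
      using \<sigma>(1) \<sigma>(2)[of p] \<sigma>(3)[of p "k - 1"] assms by (auto simp: bij_betw_def)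
  qed
  then show ?thesis
    using card_mono[of _ "\<sigma> ` {..<k}"] card_image[OF inj] assms(1) by fastforce
qed

lemma card_kth_mean_less:
  assumes "finite S" "1 \<le> k" "k \<le> card S"
  shows "card {i\<in>S. kth_mean \<theta> S k < \<theta> i} < k"
proof -
  obtain \<sigma> where \<sigma>: "bij_betw \<sigma> {..<card S} S"
    "\<And>p. p < card S \<Longrightarrow> \<theta> (\<sigma> p) = kth_mean \<theta> S (Suc p)"
    "\<And>p q. p \<le> q \<Longrightarrow> q < card S \<Longrightarrow> kth_mean \<theta> S (Suc q) \<le> kth_mean \<theta> S (Suc p)"
    using kth_mean_enumeration[OF assms(1)] by blast
  have "{i\<in>S. kth_mean \<theta> S k < \<theta> i} \<subseteq> \<sigma> ` {..<k - 1}"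
  proof clarify
    fix x assume x: "x \<in> S" "kth_mean \<theta> S k < \<theta> x"
    then obtain p where p: "p < card S" "x = \<sigma> p" using \<sigma>(1)
      by (metis bij_betw_iff_bijections lessThan_iff)
    have "p < k - 1"
    proof (rule ccontr)
      assume "\<not> p < k - 1"
      then show False using x p \<sigma>(2)[of p] \<sigma>(3)[of "k - 1" p] assms(2) by simp
    qed
    then show "x \<in> \<sigma> ` {..<k - 1}" using p by auto
  qed
  then have "card {i\<in>S. kth_mean \<theta> S k < \<theta> i} \<le> card (\<sigma> ` {..<k - 1})"
    by (intro card_mono) auto
  also have "\<dots> \<le> k - 1" using card_image_le[of "{..<k - 1}" \<sigma>] by simp
  finally have "card {i\<in>S. kth_mean \<theta> S k < \<theta> i} \<le> k - 1" .
  then show ?thesis using assms(2) by linarith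
qed

lemma sum_kth_mean_eq_top_set:
  assumes "finite S" "K \<le> card S"
  obtains U where "U \<subseteq> S" "card U = K" "(\<Sum>k=1..K. kth_mean \<theta> S k) = (\<Sum>i\<in>U. \<theta> i)"
    "\<And>u j. u \<in> U \<Longrightarrow> j \<in> S - U \<Longrightarrow> \<theta> j \<le> \<theta> u"
proof -
  obtain \<sigma> where \<sigma>: "bij_betw \<sigma> {..<card S} S"
    "\<And>p. p < card S \<Longrightarrow> \<theta> (\<sigma> p) = kth_mean \<theta> S (Suc p)"
    "\<And>p q. p \<le> q \<Longrightarrow> q < card S \<Longrightarrow> kth_mean \<theta> S (Suc q) \<le> kth_mean \<theta> S (Suc p)"
    using kth_mean_enumeration[OF assms(1)] by blast
  have injK: "inj_on \<sigma> {..<K}"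
    using \<sigma>(1) assms(2) unfolding bij_betw_def by (meson inj_on_subset lessThan_subset_iff)
  show ?thesis
  proof
    show "\<sigma> ` {..<K} \<subseteq> S" using \<sigma>(1) assms(2) by (auto simp: bij_betw_def)
    show "card (\<sigma> ` {..<K}) = K" using injK by (simp add: card_image)
    have "(\<Sum>k=1..K. kth_mean \<theta> S k) = (\<Sum>p<K. kth_mean \<theta> S (Suc p))"
      by (induction K) auto
    also have "\<dots> = (\<Sum>p<K. \<theta> (\<sigma> p))" using \<sigma>(2) assms(2) by (intro sum.cong) auto
    finally show "(\<Sum>k=1..K. kth_mean \<theta> S k) = (\<Sum>i\<in>\<sigma> ` {..<K}. \<theta> i)"
      by (simp add: sum.reindex[OF injK])
    fix u j assume u: "u \<in> \<sigma> ` {..<K}" and j: "j \<in> S - \<sigma> ` {..<K}"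
    then obtain p where p: "p < K" "u = \<sigma> p" by blast
    obtain q where q: "q < card S" "j = \<sigma> q"
      using j \<sigma>(1) by (metis DiffD1 bij_betw_iff_bijections lessThan_iff)
    have "\<not> q < K" using j q by auto
    then have "p \<le> q" using p by linarith
    then show "\<theta> j \<le> \<theta> u"
      using \<sigma>(2)[of p] \<sigma>(2)[of q] \<sigma>(3)[of p q] p q assms(2) by simp
  qed
qed

lemma sum_diff_le_card_diff:
  fixes \<theta> :: "'a \<Rightarrow> real"
  assumes "finite U" "finite T" "card U = card T" "\<And>i. i \<in> U \<union> T \<Longrightarrow> 0 \<le> \<theta> i \<and> \<theta> i \<le> 1"
  shows "(\<Sum>i\<in>U. \<theta> i) - (\<Sum>i\<in>T. \<theta> i) \<le> real (card (U - T))"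
proof -
  have "(\<Sum>i\<in>U. \<theta> i) = (\<Sum>i\<in>U \<inter> T. \<theta> i) + (\<Sum>i\<in>U - T. \<theta> i)"
    using assms(1) by (metis sum.Int_Diff)
  moreover have "(\<Sum>i\<in>T. \<theta> i) = (\<Sum>i\<in>U \<inter> T. \<theta> i) + (\<Sum>i\<in>T - U. \<theta> i)"
    using assms(2) by (metis Int_commute sum.Int_Diff)
  moreover have "(\<Sum>i\<in>U - T. \<theta> i) \<le> real (card (U - T))"
    using sum_mono[of "U - T" \<theta> "\<lambda>_. 1"] assms(4) by auto
  moreover have "0 \<le> (\<Sum>i\<in>T - U. \<theta> i)" using assms(4) by (intro sum_nonneg) auto
  ultimately show ?thesis by linarith
qed

lemma card_top_diff_le_of_few_missing:
  fixes \<theta> :: "'a \<Rightarrow> real"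
  assumes "finite S" "U \<subseteq> S" "card U = K" "\<And>u j. u \<in> U \<Longrightarrow> j \<in> S - U \<Longrightarrow> \<theta> j \<le> \<theta> u"
    and "K \<le> card {i\<in>S. hi \<le> \<theta> i} + t" "card ({i\<in>S. hi \<le> \<theta> i} - T) \<le> t"
  shows "card (U - T) \<le> 2 * t"
proof -
  define A where "A = {i\<in>S. hi \<le> \<theta> i}"
  have "card (U - A) \<le> t"
  proof (cases "U \<subseteq> A")
    case False
    then obtain u where u: "u \<in> U" "u \<notin> A" by auto
    have "A \<subseteq> U"
    proof
      fix a assume a: "a \<in> A"
      show "a \<in> U"
      proof (rule ccontr)
        assume "a \<notin> U"
        then have "\<theta> a \<le> \<theta> u" using assms(4)[OF u(1)] a unfolding A_def by blast
        moreover have "hi \<le> \<theta> a" "\<theta> u < hi" using a u assms(2) unfolding A_def by auto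
        ultimately show False by linarith
      qed
    qed
    then show ?thesis using assms(1,3,5) unfolding A_def by (simp add: card_Diff_subset)
  qed (metis Diff_eq_empty_iff card.empty le0)
  moreover have "card (U - T) \<le> card (A - T) + card (U - A)"
    using card_Un_le[of "A - T" "U - A"] card_mono[of "(A - T) \<union> (U - A)" "U - T"]
      assms(1,2) finite_subset unfolding A_def by fastforce
  ultimately show ?thesis using assms(6) unfolding A_def by linarith
qed

lemma card_top_diff_le_of_few_below:
  fixes \<theta> :: "'a \<Rightarrow> real"
  assumes "finite S" "U \<subseteq> S" "card U = K" "\<And>u j. u \<in> U \<Longrightarrow> j \<in> S - U \<Longrightarrow> \<theta> j \<le> \<theta> u"
    and "T \<subseteq> S" "card T = K"
    and "card {i\<in>S. lo < \<theta> i} \<le> K + t" "card (T \<inter> {i\<in>S. \<theta> i \<le> lo}) \<le> t"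
  shows "card (U - T) \<le> 2 * t"
proof -
  define B where "B = {i\<in>S. lo < \<theta> i}"
  have "card (B - U) \<le> t"
  proof (cases "U \<subseteq> B")
    case True
    moreover have "finite U" using assms(1,2) finite_subset by blast
    ultimately show ?thesis using assms(3,7) unfolding B_def by (simp add: card_Diff_subset)
  next
    case False
    then obtain u where u: "u \<in> U" "u \<notin> B" by auto
    have "B \<subseteq> U"
    proof
      fix j assume j: "j \<in> B"
      show "j \<in> U"
      proof (rule ccontr)
        assume "j \<notin> U"
        then have "\<theta> j \<le> \<theta> u" using assms(4)[OF u(1)] j unfolding B_def by blast
        moreover have "lo < \<theta> j" "\<theta> u \<le> lo" using j u assms(2) unfolding B_def by auto
        ultimately show False by linarith
      qed
    qed
    then show ?thesis by (metis Diff_eq_empty_iff card.empty le0)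
  qed
  moreover have "card (T - U) \<le> card (T \<inter> {i\<in>S. \<theta> i \<le> lo}) + card (B - U)"
    using card_Un_le[of "T \<inter> {i\<in>S. \<theta> i \<le> lo}" "B - U"]
      card_mono[of "(T \<inter> {i\<in>S. \<theta> i \<le> lo}) \<union> (B - U)" "T - U"] assms(1,5)
      finite_subset unfolding B_def by fastforce
  moreover have "card (U - T) = card (T - U)"
    using assms(1-3,5,6) by (metis card_Diff_subset_Int Int_commute finite_Int finite_subset)
  ultimately show ?thesis using assms(8) by linarith
qed

lemma top_K_regret_le:
  fixes \<theta> :: "nat \<Rightarrow> real"
  assumes "finite S" "K \<le> card S" "\<And>i. i \<in> S \<Longrightarrow> 0 \<le> \<theta> i \<and> \<theta> i \<le> 1"
    and "T \<subseteq> S" "card T = K"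
    and "K \<le> card {i\<in>S. hi \<le> \<theta> i} + t" "card {i\<in>S. lo < \<theta> i} \<le> K + t"
    and "card ({i\<in>S. hi \<le> \<theta> i} - T) \<le> t \<or> card (T \<inter> {i\<in>S. \<theta> i \<le> lo}) \<le> t"
  shows "(\<Sum>k=1..K. kth_mean \<theta> S k) - (\<Sum>i\<in>T. \<theta> i) \<le> 2 * real t"
proof -
  obtain U where U: "U \<subseteq> S" "card U = K" "(\<Sum>k=1..K. kth_mean \<theta> S k) = (\<Sum>i\<in>U. \<theta> i)"
    "\<And>u j. u \<in> U \<Longrightarrow> j \<in> S - U \<Longrightarrow> \<theta> j \<le> \<theta> u"
    using sum_kth_mean_eq_top_set[OF assms(1,2)] by blast
  have "card (U - T) \<le> 2 * t"
    using card_top_diff_le_of_few_missing[OF assms(1) U(1,2,4) assms(6)]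
      card_top_diff_le_of_few_below[OF assms(1) U(1,2,4) assms(4,5,7)] assms(8) by blast
  moreover have "(\<Sum>i\<in>U. \<theta> i) - (\<Sum>i\<in>T. \<theta> i) \<le> real (card (U - T))"
    using U(1,2) assms(1,3,4,5) finite_subset by (intro sum_diff_le_card_diff) auto
  ultimately show ?thesis using U(3) by linarith
qed

section \<open>Probabilistic tools\<close>

lemma (in prob_space) card_events_ge_measurable:
  assumes "finite F" "\<And>i. i \<in> F \<Longrightarrow> E i \<in> events"
  shows "{x\<in>space M. c \<le> real (card {i\<in>F. x \<in> E i})} \<in> events"
proof -
  have "(\<lambda>x. (\<Sum>i\<in>F. indicator (E i) x :: real)) \<in> borel_measurable M"
    using assms(2) by (intro borel_measurable_sum) auto
  then have "{x\<in>space M. c \<le> (\<Sum>i\<in>F. indicator (E i) x :: real)} \<in> events" by measurable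
  moreover have "real (card {i\<in>F. x \<in> E i}) = (\<Sum>i\<in>F. indicator (E i) x :: real)" for x
    using sum.inter_filter[OF assms(1), of "\<lambda>_. 1::real" "\<lambda>i. x \<in> E i"]
    by (simp add: indicator_def of_bool_def)
  ultimately show ?thesis by simp
qed

lemma (in prob_space) prob_card_events_ge:
  assumes F: "finite F" and E: "\<And>i. i \<in> F \<Longrightarrow> E i \<in> events" and c: "c > 0"
  shows "prob {x\<in>space M. c \<le> real (card {i\<in>F. x \<in> E i})} \<le> (\<Sum>i\<in>F. prob (E i)) / c"
proof -
  define u where "u = (\<lambda>x. \<Sum>i\<in>F. indicator (E i) x :: real)"
  have card_eq: "real (card {i\<in>F. x \<in> E i}) = u x" for x
    unfolding u_def using sum.inter_filter[OF F, of "\<lambda>_. 1::real" "\<lambda>i. x \<in> E i"]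
    by (simp add: indicator_def of_bool_def)
  have "integrable M u" unfolding u_def
    using E by (intro Bochner_Integration.integrable_sum integrable_real_indicator)
      (auto simp: emeasure_eq_measure)
  then have "prob {x\<in>space M. c \<le> u x} \<le> (\<integral>x. u x \<partial>M) / c"
    by (rule integral_Markov_inequality_measure[OF _ _ _ c, where A="space M"])
       (auto simp: u_def intro!: sum_nonneg)
  also have "(\<integral>x. u x \<partial>M) = (\<Sum>i\<in>F. prob (E i))"
    unfolding u_def using E by (subst Bochner_Integration.integral_sum) (auto simp: emeasure_eq_measure)
  finally show ?thesis unfolding card_eq .
qed

lemma mean_in_unit_interval:
  assumes "prob_space M" "AE x in M. 0 \<le> x \<and> x \<le> (1::real)"
  shows "0 \<le> mean M \<and> mean M \<le> 1"
proof
  interpret prob_space M by fact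
  show "0 \<le> mean M" unfolding mean_def using assms(2) by (intro integral_nonneg_AE) auto
  have "(\<integral>x. x \<partial>M) \<le> (\<integral>x. 1 \<partial>M)"
    using assms(2) by (intro integral_mono_AE') auto
  then show "mean M \<le> 1" unfolding mean_def by (simp add: prob_space)
qed

locale reward_table =
  fixes S :: "nat set" and D :: "nat \<Rightarrow> real measure"
  assumes prob_space_arm: "\<And>i. i \<in> S \<Longrightarrow> prob_space (D i)"
    and sets_arm: "\<And>i. i \<in> S \<Longrightarrow> sets (D i) = sets borel"
    and rewards_in_unit_interval: "\<And>i. i \<in> S \<Longrightarrow> AE x in D i. 0 \<le> x \<and> x \<le> 1"
begin

text \<open>Arms outside \<open>S\<close> get a dummy law, because \<open>product_prob_space\<close> asks for a probability
  measure at every index, not only at those in \<open>S \<times> UNIV\<close>.\<close>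

definition entry_law :: "nat \<times> nat \<Rightarrow> real measure" where
  "entry_law p = (if fst p \<in> S then D (fst p) else return borel 0)"

abbreviation \<Omega> :: "(nat \<times> nat \<Rightarrow> real) measure" where
  "\<Omega> \<equiv> PiM (S \<times> UNIV) entry_law"

lemma PiM_arm_laws_eq: "PiM (S \<times> UNIV) (\<lambda>p. D (fst p)) = \<Omega>"
  by (rule PiM_cong) (auto simp: entry_law_def)

lemma sets_entry_law: "sets (entry_law p) = sets borel"
  unfolding entry_law_def using sets_arm by auto

sublocale P: product_prob_space entry_law "S \<times> UNIV"
  unfolding product_prob_space_def product_prob_space_axioms_def product_sigma_finite_def
    entry_law_def
  using prob_space_arm prob_space_imp_sigma_finite by (auto simp: prob_space_return)

lemma entry_measurable:
  assumes "p \<in> S \<times> UNIV" shows "(\<lambda>r. r p) \<in> borel_measurable \<Omega>"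
proof -
  have "(\<lambda>x. x p) \<in> \<Omega> \<rightarrow>\<^sub>M entry_law p" by (rule measurable_component_singleton[OF assms])
  moreover have "\<Omega> \<rightarrow>\<^sub>M entry_law p = \<Omega> \<rightarrow>\<^sub>M borel"
    by (rule measurable_cong_sets[OF refl sets_entry_law])
  ultimately show ?thesis by simp
qed

lemma distr_entry:
  assumes "p \<in> S \<times> UNIV" shows "distr \<Omega> borel (\<lambda>r. r p) = entry_law p"
proof -
  have "distr \<Omega> borel (\<lambda>r. r p) = distr \<Omega> (entry_law p) (\<lambda>r. r p)"
    by (rule distr_cong) (auto simp: sets_entry_law)
  also have "\<dots> = entry_law p" by (rule P.PiM_component[OF assms])
  finally show ?thesis .
qed

lemma indep_entries:
  assumes J: "finite J" "J \<subseteq> S \<times> UNIV" "J \<noteq> {}"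
  shows "P.P.indep_vars (\<lambda>_. borel) (\<lambda>p r. r p) J"
proof -
  have meas: "(\<lambda>r. r p) \<in> borel_measurable \<Omega>" if "p \<in> J" for p
    using entry_measurable that J(2) by blast
  have "distr \<Omega> (\<Pi>\<^sub>M p\<in>J. borel) (\<lambda>x. \<lambda>p\<in>J. x p) = distr \<Omega> (PiM J entry_law) (\<lambda>x. restrict x J)"
    by (rule distr_cong) (auto simp: sets_entry_law restrict_def intro!: sets_PiM_cong)
  also have "\<dots> = PiM J entry_law" by (rule P.distr_PiM_restrict_finite[OF J(1,2)])
  also have "\<dots> = (\<Pi>\<^sub>M p\<in>J. distr \<Omega> borel (\<lambda>x. x p))"
  proof (rule PiM_cong)
    show "entry_law p = distr \<Omega> borel (\<lambda>x. x p)" if "p \<in> J" for p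
      using distr_entry[of p] that J(2) by auto
  qed simp
  finally show ?thesis using P.P.indep_vars_iff_distr_eq_PiM'[OF J(3) meas] by simp
qed

lemma sample_mean_hoeffding:
  assumes i: "i \<in> S" and J: "finite J" "J \<noteq> {}" and e: "e \<ge> 0"
  shows "measure \<Omega> {r\<in>space \<Omega>. mean (D i) + e \<le> (\<Sum>t\<in>J. r (i,t)) / real (card J)}
           \<le> exp (- 2 * real (card J) * e\<^sup>2)"
    and "measure \<Omega> {r\<in>space \<Omega>. (\<Sum>t\<in>J. r (i,t)) / real (card J) \<le> mean (D i) - e}
           \<le> exp (- 2 * real (card J) * e\<^sup>2)"
proof -
  obtain t0 where t0: "t0 \<in> J" using J by auto
  define I where "I = {i} \<times> J"
  have I: "finite I" "I \<subseteq> S \<times> UNIV" "I \<noteq> {}" using J i unfolding I_def by auto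
  have law: "distr \<Omega> borel (\<lambda>r. r (i, t0)) = D i" using distr_entry[of "(i,t0)"] i
    by (simp add: entry_law_def)
  have meas: "(\<lambda>r. r (i, t0)) \<in> borel_measurable \<Omega>" using entry_measurable[of "(i,t0)"] i by simp
  interpret H: Hoeffding_ineq_iid \<Omega> I "\<lambda>p r. r p" "\<lambda>r. r (i, t0)" 0 1
    "P.P.expectation (\<lambda>r. r (i, t0))"
  proof unfold_locales
    show "P.P.indep_vars (\<lambda>_. borel) (\<lambda>p r. r p) I" by (rule indep_entries[OF I])
    show "distr \<Omega> borel (\<lambda>r. r p) = distr \<Omega> borel (\<lambda>r. r (i, t0))" if "p \<in> I" for p
      using distr_entry[of p] distr_entry[of "(i,t0)"] that i unfolding I_def
      by (auto simp: entry_law_def)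
    have "AE x in distr \<Omega> borel (\<lambda>r. r (i, t0)). x \<in> {0..1}"
      unfolding law using rewards_in_unit_interval[OF i] by simp
    then show "AE x in \<Omega>. x (i, t0) \<in> {0..1}"
      using AE_distr_iff[of "\<lambda>r. r (i, t0)" \<Omega> borel "\<lambda>x. x \<in> {0..1}"] meas by simp
  qed (use I meas in simp_all)
  have mu: "P.P.expectation (\<lambda>r. r (i, t0)) = mean (D i)"
    using integral_distr[OF meas, of "\<lambda>x. x"] law unfolding mean_def by simp
  have sum_I: "(\<Sum>p\<in>I. r p) = (\<Sum>t\<in>J. r (i,t))" for r :: "nat \<times> nat \<Rightarrow> real"
  proof -
    have "{i} \<times> J = Pair i ` J" by auto
    then show ?thesis unfolding I_def using sum.reindex[of "Pair i" J r] by (simp add: inj_on_def)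
  qed
  have card_I: "card I = card J" unfolding I_def by (simp add: card_cartesian_product)
  show "measure \<Omega> {r\<in>space \<Omega>. mean (D i) + e \<le> (\<Sum>t\<in>J. r (i,t)) / real (card J)}
           \<le> exp (- 2 * real (card J) * e\<^sup>2)"
    using H.Hoeffding_ineq_ge'[OF e _ I(3)] unfolding mu sum_I card_I by simp
  show "measure \<Omega> {r\<in>space \<Omega>. (\<Sum>t\<in>J. r (i,t)) / real (card J) \<le> mean (D i) - e}
           \<le> exp (- 2 * real (card J) * e\<^sup>2)"
    using H.Hoeffding_ineq_le'[OF e _ I(3)] unfolding mu sum_I card_I by simp
qed

end

lemma sum_half_powers_le: "(\<Sum>w<n. (1/2::real)^w) \<le> 2"
proof -
  have "(\<Sum>w<n. (1/2::real)^w) = 2 - 2 * (1/2)^n"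
    by (induction n) (auto simp: field_simps)
  then show ?thesis by simp
qed

lemma sum_weighted_half_powers_le: "(\<Sum>w<n. real w * (1/2::real)^w) \<le> 2"
proof -
  have "(\<Sum>w<n. real w * (1/2::real)^w) = 2 - 2 * (real n + 1) * (1/2)^n"
  proof (induction n)
    case (Suc n)
    have "(\<Sum>w<Suc n. real w * (1/2::real)^w) = 2 - 2 * (real n + 1) * (1/2)^n + real n * (1/2)^n"
      using Suc by simp
    also have "\<dots> = 2 - 2 * (real (Suc n) + 1) * (1/2)^(Suc n)" by (simp add: algebra_simps)
    finally show ?case .
  qed simp
  then show ?thesis by simp
qed

section \<open>Successive halving\<close>

text \<open>The sample size makes each Hoeffding deviation of
  \<open>\<phi>/2\<close> in round \<open>w\<close> have probability at most \<open>\<tau>\<delta>/2^(2w+8)\<close>.\<close>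

locale halving =
  fixes S :: "nat set" and K :: nat and \<tau> \<phi> \<delta> :: real
begin

definition pulls :: "nat \<Rightarrow> nat" where
  "pulls w = nat \<lceil>2 / \<phi>\<^sup>2 * (ln (1/\<tau>) + ln (1/\<delta>) + real (2*w+8) * ln 2)\<rceil>"

definition pulls_before :: "nat \<Rightarrow> nat" where
  "pulls_before w = (\<Sum>l<w. pulls l)"

definition last_round :: nat where
  "last_round = (LEAST w. card S div 2^(Suc w) < 4*K)"

definition kept :: "nat \<Rightarrow> nat" where
  "kept w = card S div 2^w"

definition emp_mean :: "(nat \<times> nat \<Rightarrow> real) \<Rightarrow> nat \<Rightarrow> nat \<Rightarrow> real" where
  "emp_mean r i w = (\<Sum>j<pulls w. r (i, pulls_before w + j)) / real (pulls w)"

primrec survivors :: "(nat \<times> nat \<Rightarrow> real) \<Rightarrow> nat \<Rightarrow> nat set" where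
  "survivors r 0 = S"
| "survivors r (Suc w) = top_by (survivors r w) (\<lambda>i. emp_mean r i w) (kept (Suc w))"

definition chosen :: "(nat \<times> nat \<Rightarrow> real) \<Rightarrow> nat set" where
  "chosen r = top_by (survivors r last_round) (\<lambda>i. emp_mean r i last_round) K"

text \<open>The policy is memoryless: from the history it rebuilds the part of the reward table seen
  so far, and pulls the smallest arm that has not yet received its samples for the earliest
  incomplete round; once all rounds are complete it outputs.\<close>

definition times_pulled :: "history \<Rightarrow> nat \<Rightarrow> nat" where
  "times_pulled h i = length (filter (\<lambda>p. fst p = i) h)"

definition table :: "history \<Rightarrow> nat \<times> nat \<Rightarrow> real" where
  "table h = (\<lambda>(i, j). snd (filter (\<lambda>p. fst p = i) h ! j))"

definition pending :: "history \<Rightarrow> nat \<Rightarrow> nat set" where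
  "pending h w = {i \<in> survivors (table h) w. times_pulled h i < pulls_before (Suc w)}"

definition policy :: "history \<Rightarrow> bandit_action" where
  "policy h = (if \<exists>w\<le>last_round. pending h w \<noteq> {}
      then Pull (Min (pending h (LEAST w. pending h w \<noteq> {})))
      else Output (chosen (table h)))"

definition demand :: "(nat \<times> nat \<Rightarrow> real) \<Rightarrow> nat \<Rightarrow> nat" where
  "demand r i = (\<Sum>w\<le>last_round. if i \<in> survivors r w then pulls w else 0)"

definition consistent :: "(nat \<times> nat \<Rightarrow> real) \<Rightarrow> history \<Rightarrow> bool" where
  "consistent r h \<longleftrightarrow> (\<forall>i j. j < times_pulled h i \<longrightarrow> table h (i, j) = r (i, j))"

lemma survivors_Suc_subset: "survivors r (Suc w) \<subseteq> survivors r w"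
  by (simp add: top_by_subset)

lemma survivors_subset: "survivors r w \<subseteq> S"
  by (induction w) (use survivors_Suc_subset in auto)

lemma survivors_antimono: "w \<le> w' \<Longrightarrow> survivors r w' \<subseteq> survivors r w"
  by (induction w' rule: dec_induct) (use survivors_Suc_subset in blast)+

lemma pulls_before_Suc: "pulls_before (Suc w) = pulls_before w + pulls w"
  by (simp add: pulls_before_def)

lemma emp_mean_cong:
  assumes "\<And>j. j < pulls_before (Suc w) \<Longrightarrow> r' (i, j) = r (i, j)"
  shows "emp_mean r' i w = emp_mean r i w"
  unfolding emp_mean_def using assms by (simp add: pulls_before_Suc)

lemma survivors_cong:
  assumes "\<forall>w'<w. \<forall>i\<in>survivors r w'. \<forall>j<pulls_before (Suc w'). r' (i, j) = r (i, j)"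
  shows "survivors r' w = survivors r w"
  using assms
proof (induction w)
  case (Suc w)
  then have "survivors r' w = survivors r w" using less_SucI by blast
  moreover have "emp_mean r' i w = emp_mean r i w" if "i \<in> survivors r w" for i
    using Suc.prems that by (intro emp_mean_cong) auto
  ultimately show ?case
    using top_by_cong[of "survivors r w" "\<lambda>i. emp_mean r' i w" "\<lambda>i. emp_mean r i w"] by simp
qed simp

lemma table_agrees_on_complete_rounds:
  assumes "consistent r h" "\<forall>w'<w. pending h w' = {}"
  shows "\<forall>w'<w. \<forall>i\<in>survivors r w'. \<forall>j<pulls_before (Suc w'). table h (i, j) = r (i, j)"
  using assms(2)
proof (induction w)
  case (Suc w)
  then have IH: "\<forall>w'<w. \<forall>i\<in>survivors r w'. \<forall>j<pulls_before (Suc w'). table h (i, j) = r (i, j)"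
    by simp
  have "table h (i, j) = r (i, j)" if "i \<in> survivors r w" "j < pulls_before (Suc w)" for i j
  proof -
    have "i \<notin> pending h w" using Suc.prems by simp
    then have "pulls_before (Suc w) \<le> times_pulled h i"
      using that(1) survivors_cong[OF IH] unfolding pending_def by auto
    then show ?thesis using assms(1) that(2) unfolding consistent_def by auto
  qed
  then show ?case using IH less_Suc_eq by auto
qed simp

lemma pulls_before_Suc_le_demand:
  assumes "i \<in> survivors r w" "w \<le> last_round"
  shows "pulls_before (Suc w) \<le> demand r i"
proof -
  have "pulls_before (Suc w) = (\<Sum>l\<le>w. if i \<in> survivors r l then pulls l else 0)"
    unfolding pulls_before_def using survivors_antimono assms(1) lessThan_Suc_atMost
    by (intro sum.cong) auto
  also have "\<dots> \<le> demand r i" unfolding demand_def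
    using assms(2) by (intro sum_mono2) auto
  finally show ?thesis .
qed

lemma chosen_cong:
  assumes "\<forall>w'\<le>last_round. \<forall>i\<in>survivors r w'. \<forall>j<pulls_before (Suc w'). r' (i, j) = r (i, j)"
  shows "chosen r' = chosen r"
proof -
  have "survivors r' last_round = survivors r last_round"
    using assms less_imp_le survivors_cong by meson
  moreover have "emp_mean r' i last_round = emp_mean r i last_round"
    if "i \<in> survivors r last_round" for i
    using assms that by (intro emp_mean_cong) auto
  ultimately show ?thesis
    using top_by_cong[of "survivors r last_round" "\<lambda>i. emp_mean r' i last_round"] 
    unfolding chosen_def by simp
qed

lemma policy_pull_or_output:
  assumes "finite S" "consistent r h"
  shows "(\<exists>i\<in>S. times_pulled h i < demand r i \<and> policy h = Pull i) \<or> policy h = Output (chosen r)"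
proof (cases "\<exists>w\<le>last_round. pending h w \<noteq> {}")
  case True
  define w0 where "w0 = (LEAST w. pending h w \<noteq> {})"
  have ne: "pending h w0 \<noteq> {}" and le: "w0 \<le> last_round"
    using True LeastI_ex[of "\<lambda>w. pending h w \<noteq> {}"] Least_le[of "\<lambda>w. pending h w \<noteq> {}"]
    unfolding w0_def by (blast, fastforce)
  have "\<forall>w'<w0. pending h w' = {}" using not_less_Least unfolding w0_def by blast
  then have same: "survivors (table h) w0 = survivors r w0"
    by (intro survivors_cong table_agrees_on_complete_rounds[OF assms(2)])
  have "pending h w0 \<subseteq> S" using survivors_subset unfolding pending_def by blast
  then have i0: "Min (pending h w0) \<in> pending h w0"
    using ne assms(1) finite_subset by (intro Min_in) auto
  then have "Min (pending h w0) \<in> survivors r w0"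
    "times_pulled h (Min (pending h w0)) < pulls_before (Suc w0)"
    using same unfolding pending_def by auto
  moreover have "policy h = Pull (Min (pending h w0))"
    using True unfolding policy_def w0_def by simp
  ultimately show ?thesis
    using pulls_before_Suc_le_demand[OF _ le] survivors_subset by fastforce
next
  case False
  then have "\<forall>w'<Suc last_round. pending h w' = {}" by auto
  then have "chosen (table h) = chosen r"
    using table_agrees_on_complete_rounds[OF assms(2)] less_Suc_eq_le by (metis chosen_cong)
  then show ?thesis using False unfolding policy_def by auto
qed

lemma times_pulled_snoc: "times_pulled (h @ [(i, x)]) k = times_pulled h k + (if k = i then 1 else 0)"
  unfolding times_pulled_def by simp

lemma consistent_snoc:
  assumes "consistent r h"
  shows "consistent r (h @ [(i, r (i, times_pulled h i))])"
  unfolding consistent_def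
proof (intro allI impI)
  fix k j assume j: "j < times_pulled (h @ [(i, r (i, times_pulled h i))]) k"
  show "table (h @ [(i, r (i, times_pulled h i))]) (k, j) = r (k, j)"
  proof (cases "k = i \<and> j = times_pulled h k")
    case True
    then show ?thesis unfolding table_def times_pulled_def by (simp add: nth_append)
  next
    case False
    then have "j < times_pulled h k" using j by (auto simp: times_pulled_snoc split: if_splits)
    moreover have "table (h @ [(i, r (i, times_pulled h i))]) (k, j) = table h (k, j)"
      using calculation unfolding table_def times_pulled_def by (simp add: nth_append)
    ultimately show ?thesis using assms unfolding consistent_def by simp
  qed
qed

text \<open>Each pull reduces the total remaining demand by one, so the run ends in time.\<close>

lemma exec_policy_from:
  assumes "finite S"
  shows "consistent r h \<Longrightarrow> (\<forall>i\<in>S. times_pulled h i \<le> demand r i)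
    \<Longrightarrow> (\<Sum>i\<in>S. demand r i - times_pulled h i) \<le> n
    \<Longrightarrow> exec policy r n h = Some (chosen r)"
proof (induction n arbitrary: h)
  case 0
  then have "\<not> (\<exists>i\<in>S. times_pulled h i < demand r i)" using assms by auto
  then show ?case using policy_pull_or_output[OF assms 0(1)] by auto
next
  case (Suc n)
  from policy_pull_or_output[OF assms Suc(2)] show ?case
  proof
    assume "\<exists>i\<in>S. times_pulled h i < demand r i \<and> policy h = Pull i"
    then obtain i where i: "i \<in> S" "times_pulled h i < demand r i" "policy h = Pull i" by blast
    define h' where "h' = h @ [(i, r (i, times_pulled h i))]"
    have cnt: "times_pulled h' j = times_pulled h j + (if j = i then 1 else 0)" for j
      unfolding h'_def by (rule times_pulled_snoc)
    have "(\<Sum>j\<in>S. demand r j - times_pulled h j)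
        = (\<Sum>j\<in>S. (demand r j - times_pulled h' j) + (if j = i then 1 else 0))"
      using i cnt by (intro sum.cong) auto
    also have "\<dots> = (\<Sum>j\<in>S. demand r j - times_pulled h' j) + 1"
      using i assms by (simp add: sum.distrib)
    finally have "(\<Sum>j\<in>S. demand r j - times_pulled h' j) \<le> n" using Suc(4) by simp
    moreover have "consistent r h'" "\<forall>j\<in>S. times_pulled h' j \<le> demand r j"
      using consistent_snoc[OF Suc(2)] Suc(3) i cnt unfolding h'_def by auto
    ultimately have "exec policy r n h' = Some (chosen r)" using Suc.IH by blast
    then show ?thesis using i(3) unfolding h'_def times_pulled_def by simp
  qed simp
qed

lemma sum_demand:
  assumes "finite S"
  shows "(\<Sum>i\<in>S. demand r i) = (\<Sum>w\<le>last_round. pulls w * card (survivors r w))"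
proof -
  have "(\<Sum>i\<in>S. demand r i) = (\<Sum>w\<le>last_round. \<Sum>i\<in>S. if i \<in> survivors r w then pulls w else 0)"
    unfolding demand_def by (rule sum.swap)
  also have "\<dots> = (\<Sum>w\<le>last_round. pulls w * card (survivors r w))"
  proof (rule sum.cong)
    fix w
    have "(\<Sum>i\<in>S. if i \<in> survivors r w then pulls w else 0) = (\<Sum>i\<in>{i\<in>S. i \<in> survivors r w}. pulls w)"
      using sum.inter_filter[OF assms, of "\<lambda>_. pulls w" "\<lambda>i. i \<in> survivors r w"] by simp
    also have "{i\<in>S. i \<in> survivors r w} = survivors r w" using survivors_subset by auto
    finally show "(\<Sum>i\<in>S. if i \<in> survivors r w then pulls w else 0) = pulls w * card (survivors r w)"
      by simp
  qed simp
  finally show ?thesis .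
qed

lemma exec_policy:
  assumes "finite S" "(\<Sum>w\<le>last_round. pulls w * card (survivors r w)) \<le> n"
  shows "exec policy r n [] = Some (chosen r)"
  using exec_policy_from[OF assms(1), of r "[]" n] assms sum_demand[OF assms(1), of r]
  by (simp add: consistent_def times_pulled_def)

lemma card_survivors: "finite S \<Longrightarrow> card (survivors r w) = kept w"
proof (induction w)
  case (Suc w)
  have "kept (Suc w) \<le> kept w" unfolding kept_def by (simp add: div_le_mono2)
  then show ?case using Suc card_top_by[of "survivors r w"] finite_subset[OF survivors_subset]
    by simp
qed (simp add: kept_def)

lemma survivor_eliminated:
  assumes "i \<in> S" "i \<notin> survivors r k"
  obtains w where "w < k" "i \<in> survivors r w" "i \<notin> survivors r (Suc w)"
  using assms(2)
proof (induction k)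
  case (Suc k)
  then show ?case by (cases "i \<in> survivors r k") (auto intro: less_SucI)
qed (use assms(1) in simp)

text \<open>In the two lemmas below, arms of mean \<open>\<ge> hi\<close> are good and arms of mean \<open>\<le> lo\<close> are bad.
  If a good arm loses against a bad one, then one of the two was misestimated by \<open>\<phi>/2\<close>.\<close>

lemma eliminated_good_arm_underestimated:
  fixes \<theta> :: "nat \<Rightarrow> real"
  assumes "finite S" "lo + \<phi> \<le> hi" "hi \<le> \<theta> i"
    and "i \<in> survivors r w" "i \<notin> survivors r (Suc w)"
    and "card {j\<in>S. lo < \<theta> j} + card {j\<in>S. \<theta> j \<le> lo \<and> \<theta> j + \<phi>/2 \<le> emp_mean r j w}
           < kept (Suc w)"
  shows "emp_mean r i w \<le> \<theta> i - \<phi>/2"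
proof (rule ccontr)
  assume i_fine: "\<not> emp_mean r i w \<le> \<theta> i - \<phi>/2"
  have "survivors r (Suc w) \<subseteq>
      {j\<in>S. lo < \<theta> j} \<union> {j\<in>S. \<theta> j \<le> lo \<and> \<theta> j + \<phi>/2 \<le> emp_mean r j w}"
  proof
    fix j assume j: "j \<in> survivors r (Suc w)"
    have "emp_mean r i w \<le> emp_mean r j w"
      using assms(4,5) j finite_subset[OF survivors_subset assms(1)]
      by (intro top_by_dominates[of "survivors r w" i "\<lambda>i. emp_mean r i w" "kept (Suc w)"]) auto
    then show "j \<in> {j\<in>S. lo < \<theta> j} \<union> {j\<in>S. \<theta> j \<le> lo \<and> \<theta> j + \<phi>/2 \<le> emp_mean r j w}"
      using j survivors_subset i_fine assms(2,3) by fastforce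
  qed
  then have "card (survivors r (Suc w)) \<le>
      card ({j\<in>S. lo < \<theta> j} \<union> {j\<in>S. \<theta> j \<le> lo \<and> \<theta> j + \<phi>/2 \<le> emp_mean r j w})"
    using assms(1) by (intro card_mono) auto
  also have "\<dots> \<le>
      card {j\<in>S. lo < \<theta> j} + card {j\<in>S. \<theta> j \<le> lo \<and> \<theta> j + \<phi>/2 \<le> emp_mean r j w}"
    by (rule card_Un_le)
  finally show False using assms(6) card_survivors[OF assms(1), of r "Suc w"] by linarith
qed

lemma chosen_few_errors:
  fixes \<theta> :: "nat \<Rightarrow> real"
  assumes "finite S" "lo + \<phi> \<le> hi"
    and few_bad_survive: "\<forall>w<last_round. card {j\<in>S. lo < \<theta> j}
          + card {j\<in>S. \<theta> j \<le> lo \<and> \<theta> j + \<phi>/2 \<le> emp_mean r j w} < kept (Suc w)"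
    and few_good_under: "card {(w, i)\<in>{..last_round} \<times> {i\<in>S. hi \<le> \<theta> i}.
          emp_mean r i w \<le> \<theta> i - \<phi>/2} \<le> t"
    and few_bad_over: "card {j\<in>S. \<theta> j \<le> lo \<and> \<theta> j + \<phi>/2 \<le> emp_mean r j last_round} \<le> t"
  shows "card ({i\<in>S. hi \<le> \<theta> i} - chosen r) \<le> t \<or> card (chosen r \<inter> {i\<in>S. \<theta> i \<le> lo}) \<le> t"
proof (cases "\<exists>i\<in>survivors r last_round - chosen r. hi \<le> \<theta> i \<and>
                 \<not> emp_mean r i last_round \<le> \<theta> i - \<phi>/2")
  case True
  then obtain i where i: "i \<in> survivors r last_round - chosen r" "hi \<le> \<theta> i"
    "\<not> emp_mean r i last_round \<le> \<theta> i - \<phi>/2" by blast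
  have "chosen r \<inter> {i\<in>S. \<theta> i \<le> lo} \<subseteq>
      {j\<in>S. \<theta> j \<le> lo \<and> \<theta> j + \<phi>/2 \<le> emp_mean r j last_round}"
  proof
    fix j assume j: "j \<in> chosen r \<inter> {i\<in>S. \<theta> i \<le> lo}"
    have "emp_mean r i last_round \<le> emp_mean r j last_round"
      using i(1) j finite_subset[OF survivors_subset assms(1)] unfolding chosen_def
      by (intro top_by_dominates[of "survivors r last_round" i _ K]) auto
    then show "j \<in> {j\<in>S. \<theta> j \<le> lo \<and> \<theta> j + \<phi>/2 \<le> emp_mean r j last_round}"
      using i(2,3) j assms(2) by auto
  qed
  then have "card (chosen r \<inter> {i\<in>S. \<theta> i \<le> lo}) \<le>
      card {j\<in>S. \<theta> j \<le> lo \<and> \<theta> j + \<phi>/2 \<le> emp_mean r j last_round}"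
    using assms(1) by (intro card_mono) auto
  then have "card (chosen r \<inter> {i\<in>S. \<theta> i \<le> lo}) \<le> t" using few_bad_over by linarith
  then show ?thesis ..
next
  case False
  define P where "P = {(w, i)\<in>{..last_round} \<times> {i\<in>S. hi \<le> \<theta> i}. emp_mean r i w \<le> \<theta> i - \<phi>/2}"
  have misses: "{i\<in>S. hi \<le> \<theta> i} - chosen r \<subseteq> snd ` P"
  proof
    fix i assume i: "i \<in> {i\<in>S. hi \<le> \<theta> i} - chosen r"
    obtain w where w: "w \<le> last_round" "emp_mean r i w \<le> \<theta> i - \<phi>/2"
    proof (cases "i \<in> survivors r last_round")
      case True
      then show ?thesis using that[of last_round] False i by blast
    next
      case not_survivor: False
      obtain w where "w < last_round" "i \<in> survivors r w" "i \<notin> survivors r (Suc w)"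
        using survivor_eliminated[OF _ not_survivor] i by blast
      moreover have "hi \<le> \<theta> i" using i by simp
      ultimately have "emp_mean r i w \<le> \<theta> i - \<phi>/2"
        using eliminated_good_arm_underestimated[OF assms(1,2)] few_bad_survive by blast
      then show ?thesis using that[of w] \<open>w < last_round\<close> by simp
    qed
    then have "(w, i) \<in> P" using i unfolding P_def by simp
    then show "i \<in> snd ` P" by force
  qed
  have "P \<subseteq> {..last_round} \<times> S" unfolding P_def by auto
  then have "finite P" using assms(1) finite_subset by blast
  then have "card ({i\<in>S. hi \<le> \<theta> i} - chosen r) \<le> card P"
    using card_mono[OF finite_imageI misses] card_image_le[of P snd] by linarith
  then have "card ({i\<in>S. hi \<le> \<theta> i} - chosen r) \<le> t" using few_good_under unfolding P_def by linarith
  then show ?thesis ..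
qed

end

section \<open>Sample complexity\<close>

locale halving_params = halving +
  fixes t :: nat
  assumes finite_S: "finite S" and K_pos: "1 \<le> K"
    and \<tau>_pos: "0 < \<tau>" and \<tau>_le: "\<tau> \<le> 1/2" and \<tau>_K: "\<tau> * real K = real t"
    and \<phi>_pos: "0 < \<phi>" and \<phi>_le: "\<phi> \<le> 1" and \<delta>_pos: "0 < \<delta>" and \<delta>_le: "\<delta> \<le> 1/2"
    and card_S_ge: "K + t + 1 \<le> card S"
begin

lemma t_pos: "1 \<le> t"
proof -
  have "0 < \<tau> * real K" using \<tau>_pos K_pos by simp
  then show ?thesis using \<tau>_K by simp
qed

lemma twice_t_le: "2 * t \<le> K"
proof -
  have "real t \<le> real K / 2" using \<tau>_le K_pos by (simp flip: \<tau>_K)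
  then show ?thesis by linarith
qed

definition log_term :: real where
  "log_term = ln (1/\<tau>) + ln (1/\<delta>)"

lemma one_le_log_term: "1 \<le> log_term"
proof -
  have "ln 2 \<le> ln (1/\<tau>)" "ln 2 \<le> ln (1/\<delta>)"
    using \<tau>_pos \<tau>_le \<delta>_pos \<delta>_le by (simp_all add: field_simps)
  then show ?thesis unfolding log_term_def using ln2_ge_two_thirds by linarith
qed

lemma real_pulls:
  "real (pulls w) = of_int \<lceil>2 / \<phi>\<^sup>2 * (log_term + real (2*w+8) * ln 2)\<rceil>"
proof -
  have "0 \<le> 2 / \<phi>\<^sup>2 * (log_term + real (2*w+8) * ln 2)"
    using one_le_log_term by (intro mult_nonneg_nonneg) auto
  then show ?thesis unfolding pulls_def log_term_def by (simp add: add.assoc)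
qed

lemma pulls_ge: "2 / \<phi>\<^sup>2 * (log_term + real (2*w+8) * ln 2) \<le> real (pulls w)"
  unfolding real_pulls by (rule le_of_int_ceiling)

lemma pulls_le: "real (pulls w) \<le> 2 / \<phi>\<^sup>2 * (log_term + real (2*w+8) * ln 2) + 1"
  unfolding real_pulls by linarith

lemma pulls_pos: "0 < pulls w"
proof -
  have "0 < 2 / \<phi>\<^sup>2 * (log_term + real (2*w+8) * ln 2)"
    using one_le_log_term \<phi>_pos by (intro mult_pos_pos add_pos_nonneg) auto
  then show ?thesis using pulls_ge[of w] by linarith
qed

lemma hoeffding_bound_pulls: "exp (- 2 * real (pulls w) * (\<phi>/2)\<^sup>2) \<le> \<tau> * \<delta> / 2^(2*w+8)"
proof -
  have "log_term + real (2*w+8) * ln 2 \<le> real (pulls w) * \<phi>\<^sup>2 / 2"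
    using pulls_ge[of w] \<phi>_pos by (simp add: field_simps)
  then have "exp (- 2 * real (pulls w) * (\<phi>/2)\<^sup>2) \<le> exp (- (log_term + real (2*w+8) * ln 2))"
    by (simp add: power_divide field_simps)
  also have "log_term + real (2*w+8) * ln 2 = ln (2^(2*w+8) / (\<tau> * \<delta>))"
    unfolding log_term_def using \<tau>_pos \<delta>_pos by (simp add: ln_div ln_mult ln_realpow)
  finally show ?thesis using \<tau>_pos \<delta>_pos by (simp add: exp_minus)
qed

lemma kept_last_round: "kept (Suc last_round) < 4*K"
proof -
  have "card S < 2^(Suc (card S))" by (rule less_trans[OF less_exp]) simp
  then have "card S div 2^(Suc (card S)) < 4*K" using K_pos by simp
  then show ?thesis unfolding kept_def last_round_def by (rule LeastI)
qed

lemma kept_before_last_round: "w < last_round \<Longrightarrow> 4*K \<le> kept (Suc w)"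
  unfolding kept_def last_round_def using not_less_Least by force

lemma K_le_kept_last_round: "K \<le> kept last_round"
proof (cases last_round)
  case 0
  then show ?thesis using card_S_ge by (simp add: kept_def)
next
  case (Suc w)
  then show ?thesis using kept_before_last_round[of w] by simp
qed

lemma card_S_less: "real (card S) < 2^(last_round + 3) * real K"
proof -
  have "card S < 2^(Suc last_round) * (4*K)"
    using kept_last_round unfolding kept_def by (simp add: div_less_iff_less_mult mult_ac)
  then have "real (card S) < real (2^(Suc last_round) * (4*K))" by (simp only: of_nat_less_iff)
  then have "real (card S) < 2^(Suc last_round) * (4 * real K)" by simp
  then show ?thesis by (simp add: power_add)
qed

lemma kept_ge: "1 \<le> kept w \<Longrightarrow> real (card S) / 2^(w+1) \<le> real (kept w)"
proof -
  assume "1 \<le> kept w"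
  have "card S = card S div 2^w * 2^w + card S mod 2^w" by (rule div_mult_mod_eq[symmetric])
  moreover have "card S mod 2^w < 2^w" by simp
  ultimately have "card S < kept w * 2^w + 2^w" unfolding kept_def by linarith
  then have "card S < (kept w + 1) * 2^w" by (simp add: ring_distribs)
  then have "real (card S) < real ((kept w + 1) * 2^w)" by (simp only: of_nat_less_iff)
  then have "real (card S) < (real (kept w) + 1) * 2^w" by (simp add: ring_distribs)
  also have "\<dots> \<le> (2 * real (kept w)) * 2^w" using \<open>1 \<le> kept w\<close> by (intro mult_right_mono) auto
  finally show ?thesis by (simp add: field_simps)
qed

lemma kept_le: "real (kept w) \<le> real (card S) / 2^w"
proof -
  have "real (card S div 2^w * 2^w) \<le> real (card S)"
    by (simp only: of_nat_le_iff div_times_less_eq_dividend)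
  then have "real (card S div 2^w) * 2^w \<le> real (card S)" by simp
  then show ?thesis by (simp add: kept_def field_simps)
qed

definition budget :: nat where
  "budget = nat \<lfloor>50 * real (card S) / \<phi>\<^sup>2 * (ln (1 / \<tau>) + ln (1 / \<delta>))\<rfloor>"

lemma round_pulls_le:
  "real (pulls w * kept w)
     \<le> card S / \<phi>\<^sup>2 * ((2 * log_term + 17) * (1/2)^w + 4 * (real w * (1/2)^w))"
proof -
  have "real (pulls w * kept w)
      \<le> (2 / \<phi>\<^sup>2 * (log_term + real (2*w+8) * ln 2) + 1) * (card S / 2^w)"
    unfolding of_nat_mult using pulls_le kept_le
  proof (intro mult_mono)
    show "0 \<le> 2 / \<phi>\<^sup>2 * (log_term + real (2*w+8) * ln 2) + 1"
      using one_le_log_term by (intro add_nonneg_nonneg mult_nonneg_nonneg) auto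
  qed auto
  also have "\<dots> \<le> (2 / \<phi>\<^sup>2 * (log_term + real (2*w+8)) + 1 / \<phi>\<^sup>2) * (card S / 2^w)"
  proof (intro mult_right_mono add_mono)
    have "real (2*w+8) * ln 2 \<le> real (2*w+8)" using ln_2_less_1 by (simp add: mult_left_le)
    then show "2 / \<phi>\<^sup>2 * (log_term + real (2*w+8) * ln 2) \<le> 2 / \<phi>\<^sup>2 * (log_term + real (2*w+8))"
      by (intro mult_left_mono) auto
    show "1 \<le> 1 / \<phi>\<^sup>2" using \<phi>_pos \<phi>_le by (simp add: field_simps power_le_one)
  qed auto
  also have "\<dots> = card S / \<phi>\<^sup>2 * ((2 * log_term + 17) * (1/2)^w + 4 * (real w * (1/2)^w))"
    using \<phi>_pos by (simp add: field_simps power_divide)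
  finally show ?thesis .
qed

lemma total_pulls_le_budget: "(\<Sum>w\<le>last_round. pulls w * card (survivors r w)) \<le> budget"
proof -
  have "real (\<Sum>w\<le>last_round. pulls w * card (survivors r w)) = (\<Sum>w\<le>last_round. real (pulls w * kept w))"
    using card_survivors[OF finite_S] by simp
  also have "\<dots> \<le> (\<Sum>w<Suc last_round.
      card S / \<phi>\<^sup>2 * ((2 * log_term + 17) * (1/2)^w + 4 * (real w * (1/2)^w)))"
    unfolding lessThan_Suc_atMost by (intro sum_mono round_pulls_le)
  also have "\<dots> = card S / \<phi>\<^sup>2 * ((2 * log_term + 17) * (\<Sum>w<Suc last_round. (1/2)^w)
      + 4 * (\<Sum>w<Suc last_round. real w * (1/2)^w))"
    by (simp add: sum_distrib_left sum.distrib algebra_simps)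
  also have "\<dots> \<le> card S / \<phi>\<^sup>2 * ((2 * log_term + 17) * 2 + 4 * 2)"
    using sum_half_powers_le[of "Suc last_round"] sum_weighted_half_powers_le[of "Suc last_round"]
      one_le_log_term by (intro mult_left_mono add_mono) simp_all
  also have "\<dots> \<le> card S / \<phi>\<^sup>2 * (50 * log_term)"
    using one_le_log_term by (intro mult_left_mono) auto
  finally show ?thesis unfolding budget_def log_term_def by (simp add: le_nat_floor mult_ac)
qed

end

section \<open>Failure probability\<close>

locale halving_bandit = halving_params S K \<tau> \<phi> \<delta> t + reward_table S D
  for S K \<tau> \<phi> \<delta> t D
begin

abbreviation \<theta> :: "nat \<Rightarrow> real" where "\<theta> i \<equiv> mean (D i)"

lemma emp_mean_measurable: "i \<in> S \<Longrightarrow> (\<lambda>r. emp_mean r i w) \<in> borel_measurable \<Omega>"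
  unfolding emp_mean_def by (intro borel_measurable_divide borel_measurable_sum borel_measurable_const
      entry_measurable) auto

lemma top_by_survivors_measurable:
  assumes "\<And>Z. {r\<in>space \<Omega>. survivors r w = Z} \<in> sets \<Omega>"
  shows "{r\<in>space \<Omega>. top_by (survivors r w) (\<lambda>i. emp_mean r i w) k = Y} \<in> sets \<Omega>"
proof -
  have "{r\<in>space \<Omega>. top_by (survivors r w) (\<lambda>i. emp_mean r i w) k = Y} =
      (\<Union>Z\<in>Pow S. {r\<in>space \<Omega>. survivors r w = Z} \<inter>
         {r\<in>space \<Omega>. top_by Z (\<lambda>i. emp_mean r i w) k = Y})"
    using survivors_subset by blast
  also have "\<dots> \<in> sets \<Omega>"
    using finite_S assms finite_subset emp_mean_measurable
    by (intro sets.finite_UN sets.Int top_by_measurable) auto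
  finally show ?thesis .
qed

lemma survivors_measurable: "{r\<in>space \<Omega>. survivors r w = Z} \<in> sets \<Omega>"
proof (induction w arbitrary: Z)
  case 0
  have "{r\<in>space \<Omega>. survivors r 0 = Z} = (if S = Z then space \<Omega> else {})" by auto
  then show ?case by simp
next
  case (Suc w)
  then show ?case using top_by_survivors_measurable by simp
qed

lemma chosen_measurable: "{r\<in>space \<Omega>. P (chosen r)} \<in> sets \<Omega>"
proof -
  have "chosen r \<subseteq> S" for r
    unfolding chosen_def using top_by_subset survivors_subset by (meson subset_trans)
  then have "{r\<in>space \<Omega>. P (chosen r)} = (\<Union>Y\<in>{Y\<in>Pow S. P Y}. {r\<in>space \<Omega>. chosen r = Y})"
    by blast
  also have "\<dots> \<in> sets \<Omega>"
    using finite_S top_by_survivors_measurable[OF survivors_measurable] unfolding chosen_def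
    by (intro sets.finite_UN) auto
  finally show ?thesis .
qed

definition overestimated :: "nat \<Rightarrow> nat \<Rightarrow> (nat \<times> nat \<Rightarrow> real) set" where
  "overestimated i w = {r\<in>space \<Omega>. \<theta> i + \<phi>/2 \<le> emp_mean r i w}"

definition underestimated :: "nat \<Rightarrow> nat \<Rightarrow> (nat \<times> nat \<Rightarrow> real) set" where
  "underestimated i w = {r\<in>space \<Omega>. emp_mean r i w \<le> \<theta> i - \<phi>/2}"

lemma overestimated_measurable: "i \<in> S \<Longrightarrow> overestimated i w \<in> sets \<Omega>"
  unfolding overestimated_def using emp_mean_measurable by measurable

lemma underestimated_measurable: "i \<in> S \<Longrightarrow> underestimated i w \<in> sets \<Omega>"
  unfolding underestimated_def using emp_mean_measurable by measurable

lemma emp_mean_eq_sample_mean: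
  "emp_mean r i w = (\<Sum>j\<in>{pulls_before w..<pulls_before w + pulls w}. r (i, j))
     / real (card {pulls_before w..<pulls_before w + pulls w})"
  unfolding emp_mean_def
  by (simp add: sum.shift_bounds_nat_ivl[where k="pulls_before w" and m=0, simplified]
      atLeast0LessThan add.commute)

lemma prob_overestimated_le: "i \<in> S \<Longrightarrow> measure \<Omega> (overestimated i w) \<le> \<tau> * \<delta> / 2^(2*w+8)"
  using sample_mean_hoeffding(1)[of i "{pulls_before w..<pulls_before w + pulls w}" "\<phi>/2"]
    pulls_pos[of w] \<phi>_pos hoeffding_bound_pulls[of w]
  unfolding overestimated_def emp_mean_eq_sample_mean by simp

lemma prob_underestimated_le: "i \<in> S \<Longrightarrow> measure \<Omega> (underestimated i w) \<le> \<tau> * \<delta> / 2^(2*w+8)"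
  using sample_mean_hoeffding(2)[of i "{pulls_before w..<pulls_before w + pulls w}" "\<phi>/2"]
    pulls_pos[of w] \<phi>_pos hoeffding_bound_pulls[of w]
  unfolding underestimated_def emp_mean_eq_sample_mean by simp

text \<open>The three ways the run can fail, for a set \<open>A\<close> of good and a set \<open>B\<close> of bad arms.\<close>

definition too_many_over :: "nat set \<Rightarrow> nat \<Rightarrow> (nat \<times> nat \<Rightarrow> real) set" where
  "too_many_over B w = {r\<in>space \<Omega>.
     real (kept (Suc w)) - real (K + t) \<le> real (card {i\<in>B. r \<in> overestimated i w})}"

definition too_many_under :: "nat set \<Rightarrow> (nat \<times> nat \<Rightarrow> real) set" where
  "too_many_under A = {r\<in>space \<Omega>.
     real t \<le> real (card {p\<in>{..last_round} \<times> A. r \<in> underestimated (snd p) (fst p)})}"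

definition too_many_over_last :: "nat set \<Rightarrow> (nat \<times> nat \<Rightarrow> real) set" where
  "too_many_over_last B = {r\<in>space \<Omega>. real t \<le> real (card {i\<in>B. r \<in> overestimated i last_round})}"

lemma too_many_over_measurable: "B \<subseteq> S \<Longrightarrow> too_many_over B w \<in> sets \<Omega>"
  unfolding too_many_over_def using finite_S finite_subset
  by (intro P.P.card_events_ge_measurable overestimated_measurable) auto

lemma too_many_under_measurable: "A \<subseteq> S \<Longrightarrow> too_many_under A \<in> sets \<Omega>"
  unfolding too_many_under_def using finite_S finite_subset
  by (intro P.P.card_events_ge_measurable underestimated_measurable) auto

lemma too_many_over_last_measurable: "B \<subseteq> S \<Longrightarrow> too_many_over_last B \<in> sets \<Omega>"
  unfolding too_many_over_last_def using finite_S finite_subset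
  by (intro P.P.card_events_ge_measurable overestimated_measurable) auto

lemma prob_too_many_over_le:
  assumes "B \<subseteq> S" "w < last_round"
  shows "measure \<Omega> (too_many_over B w) \<le> \<tau> * \<delta> / 32 * (1/2)^w"
proof -
  define c where "c = real (kept (Suc w)) - real (K + t)"
  have "4 * K \<le> kept (Suc w)" by (rule kept_before_last_round[OF assms(2)])
  then have "real (kept (Suc w)) \<le> 2 * c" "1 \<le> kept (Suc w)"
    unfolding c_def using twice_t_le K_pos by auto
  then have "card S / 2^(w+3) \<le> real (kept (Suc w)) / 2"
    using kept_ge[of "Suc w"] by (simp add: power_add)
  then have c_ge: "card S / 2^(w+3) \<le> c" using \<open>real (kept (Suc w)) \<le> 2 * c\<close> by linarith
  moreover have "0 < card S / 2^(w+3)" using card_S_ge by simp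
  ultimately have c_pos: "0 < c" by linarith
  have "measure \<Omega> (too_many_over B w) \<le> (\<Sum>i\<in>B. measure \<Omega> (overestimated i w)) / c"
    unfolding too_many_over_def c_def[symmetric] using assms(1) finite_S finite_subset c_pos
    by (intro P.P.prob_card_events_ge overestimated_measurable) auto
  also have "\<dots> \<le> (\<Sum>i\<in>B. \<tau> * \<delta> / 2^(2*w+8)) / c"
    using prob_overestimated_le assms(1) c_pos by (intro divide_right_mono sum_mono) auto
  also have "\<dots> = card B * (\<tau> * \<delta> / 2^(2*w+8)) / c" by simp
  also have "\<dots> \<le> card S * (\<tau> * \<delta> / 2^(2*w+8)) / c"
    using card_mono[OF finite_S assms(1)] c_pos \<tau>_pos \<delta>_pos
    by (intro divide_right_mono mult_right_mono) auto
  also have "\<dots> \<le> card S * (\<tau> * \<delta> / 2^(2*w+8)) / (card S / 2^(w+3))"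
    using c_ge c_pos card_S_ge \<tau>_pos \<delta>_pos by (intro divide_left_mono) auto
  also have "\<dots> = \<tau> * \<delta> / 32 * (1/2)^w"
  proof -
    have "(2::real)^(2*w) = 2^w * 2^w" by (metis mult_2 power_add)
    then show ?thesis using card_S_ge by (simp add: power_add field_simps)
  qed
  finally show ?thesis .
qed

lemma prob_too_many_under_le:
  assumes "A \<subseteq> S" "card A \<le> 2 * K"
  shows "measure \<Omega> (too_many_under A) \<le> \<delta> / 64"
proof -
  have "measure \<Omega> (too_many_under A)
      \<le> (\<Sum>p\<in>{..last_round} \<times> A. measure \<Omega> (underestimated (snd p) (fst p))) / real t"
    unfolding too_many_under_def using assms(1) finite_S finite_subset t_pos
    by (intro P.P.prob_card_events_ge underestimated_measurable) auto
  also have "\<dots> \<le> (\<Sum>p\<in>{..last_round} \<times> A. \<tau> * \<delta> / 256 * (1/2)^(fst p)) / real t"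
  proof (intro divide_right_mono sum_mono)
    fix p assume p: "p \<in> {..last_round} \<times> A"
    have "(2::real)^(fst p + 8) \<le> 2^(2 * fst p + 8)" by (intro power_increasing) auto
    then have "\<tau> * \<delta> / 2^(2 * fst p + 8) \<le> \<tau> * \<delta> / 2^(fst p + 8)"
      using \<tau>_pos \<delta>_pos by (intro divide_left_mono) auto
    moreover have "measure \<Omega> (underestimated (snd p) (fst p)) \<le> \<tau> * \<delta> / 2^(2 * fst p + 8)"
      using prob_underestimated_le p assms(1) by auto
    moreover have "\<tau> * \<delta> / 2^(fst p + 8) = \<tau> * \<delta> / 256 * (1/2)^(fst p)"
      by (simp add: power_add field_simps)
    ultimately show "measure \<Omega> (underestimated (snd p) (fst p)) \<le> \<tau> * \<delta> / 256 * (1/2)^(fst p)"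
      by linarith
  qed simp
  also have "\<dots> = real (card A) * (\<tau> * \<delta> / 256) * (\<Sum>w<Suc last_round. (1/2)^w) / real t"
  proof -
    have "(\<Sum>p\<in>{..last_round} \<times> A. \<tau> * \<delta> / 256 * (1/2::real)^(fst p))
        = (\<Sum>w\<le>last_round. \<Sum>i\<in>A. \<tau> * \<delta> / 256 * (1/2::real)^w)"
      unfolding sum.cartesian_product by (rule sum.cong) auto
    then show ?thesis by (simp add: lessThan_Suc_atMost sum_distrib_left sum_divide_distrib mult_ac)
  qed
  also have "\<dots> \<le> real (2 * K) * (\<tau> * \<delta> / 256) * 2 / real t"
    using assms(2) sum_half_powers_le[of "Suc last_round"] t_pos \<tau>_pos \<delta>_pos
    by (intro divide_right_mono mult_mono) (simp_all add: sum_nonneg del: sum.lessThan_Suc)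
  also have "\<dots> = \<delta> / 64" using \<tau>_K t_pos by (simp add: field_simps)
  finally show ?thesis .
qed

lemma prob_too_many_over_last_le:
  assumes "B \<subseteq> S"
  shows "measure \<Omega> (too_many_over_last B) \<le> \<delta> / 32"
proof -
  have "measure \<Omega> (too_many_over_last B) \<le> (\<Sum>i\<in>B. measure \<Omega> (overestimated i last_round)) / real t"
    unfolding too_many_over_last_def using assms finite_S finite_subset t_pos
    by (intro P.P.prob_card_events_ge overestimated_measurable) auto
  also have "\<dots> \<le> (\<Sum>i\<in>B. \<tau> * \<delta> / 2^(2*last_round+8)) / real t"
    using prob_overestimated_le assms t_pos by (intro divide_right_mono sum_mono) auto
  also have "\<dots> = real (card B) * (\<tau> * \<delta> / 2^(2*last_round+8)) / real t" by simp
  also have "\<dots> \<le> (2^(last_round+3) * real K) * (\<tau> * \<delta> / 2^(2*last_round+8)) / real t"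
    using card_mono[OF finite_S assms] card_S_less \<tau>_pos \<delta>_pos t_pos
    by (intro divide_right_mono mult_right_mono) auto
  also have "\<dots> = \<delta> / 2^(last_round+5)"
  proof -
    have "(2::real)^(2*last_round) = 2^last_round * 2^last_round" by (metis mult_2 power_add)
    then show ?thesis using \<tau>_K t_pos by (simp add: power_add field_simps)
  qed
  also have "\<dots> \<le> \<delta> / 32" using \<delta>_pos by (intro divide_left_mono) (auto simp: power_add)
  finally show ?thesis .
qed

lemma prob_failure_le:
  assumes "A \<subseteq> S" "card A \<le> 2 * K" "B \<subseteq> S"
  defines "E \<equiv> (\<Union>w<last_round. too_many_over B w) \<union> too_many_under A \<union> too_many_over_last B"
  shows "E \<in> sets \<Omega>" "measure \<Omega> E \<le> \<delta>"
proof -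
  have meas: "too_many_over B w \<in> sets \<Omega>" "too_many_under A \<in> sets \<Omega>"
    "too_many_over_last B \<in> sets \<Omega>" for w
    using assms too_many_over_measurable too_many_under_measurable too_many_over_last_measurable
    by auto
  then show "E \<in> sets \<Omega>" unfolding E_def by auto
  have "(\<Sum>w<last_round. measure \<Omega> (too_many_over B w)) \<le> (\<Sum>w<last_round. \<tau> * \<delta> / 32 * (1/2)^w)"
    using prob_too_many_over_le assms(3) by (intro sum_mono) auto
  also have "\<dots> = \<tau> * \<delta> / 32 * (\<Sum>w<last_round. (1/2)^w)" by (simp add: sum_distrib_left)
  also have "\<dots> \<le> \<tau> * \<delta> / 32 * 2"
    using sum_half_powers_le \<tau>_pos \<delta>_pos by (intro mult_left_mono) auto
  also have "\<dots> \<le> \<delta> / 32" using \<tau>_le \<delta>_pos by simp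
  finally have over: "(\<Sum>w<last_round. measure \<Omega> (too_many_over B w)) \<le> \<delta> / 32" .
  have "measure \<Omega> E \<le> measure \<Omega> (\<Union>w<last_round. too_many_over B w)
      + measure \<Omega> (too_many_under A) + measure \<Omega> (too_many_over_last B)"
    unfolding E_def using meas
    by (intro order.trans[OF measure_Un_le] add_right_mono) (auto simp: measure_Un_le)
  also have "\<dots> \<le> (\<Sum>w<last_round. measure \<Omega> (too_many_over B w))
      + measure \<Omega> (too_many_under A) + measure \<Omega> (too_many_over_last B)"
    using meas by (simp add: measure_UNION_le)
  also have "\<dots> \<le> \<delta>"
    using over prob_too_many_under_le[OF assms(1,2)] prob_too_many_over_last_le[OF assms(3)] \<delta>_pos
    by linarith
  finally show "measure \<Omega> E \<le> \<delta>" .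
qed

lemma chosen_subset: "chosen r \<subseteq> S"
  unfolding chosen_def using top_by_subset survivors_subset by (meson subset_trans)

lemma card_chosen: "card (chosen r) = K"
  unfolding chosen_def using finite_subset[OF survivors_subset finite_S] K_le_kept_last_round
  by (intro card_top_by) (simp_all add: card_survivors[OF finite_S])

lemma chosen_top_K_set_unless_failure:
  assumes "K \<le> card {i\<in>S. hi \<le> \<theta> i} + t" "card {i\<in>S. lo < \<theta> i} \<le> K + t" "lo + \<phi> \<le> hi"
  defines "A \<equiv> {i\<in>S. hi \<le> \<theta> i}" and "B \<equiv> {i\<in>S. \<theta> i \<le> lo}"
  assumes "r \<in> space \<Omega>"
    and "r \<notin> (\<Union>w<last_round. too_many_over B w) \<union> too_many_under A \<union> too_many_over_last B"
  shows "top_K_set \<theta> S K (2 * \<tau>) (chosen r)"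
proof -
  have over: "{i\<in>B. r \<in> overestimated i w} = {j\<in>S. \<theta> j \<le> lo \<and> \<theta> j + \<phi>/2 \<le> emp_mean r j w}" for w
    unfolding B_def overestimated_def using assms(6) by auto
  have under: "{p\<in>{..last_round} \<times> A. r \<in> underestimated (snd p) (fst p)}
      = {(w, i)\<in>{..last_round} \<times> A. emp_mean r i w \<le> \<theta> i - \<phi>/2}"
    unfolding underestimated_def using assms(6) by auto
  have "card ({i\<in>S. hi \<le> \<theta> i} - chosen r) \<le> t \<or> card (chosen r \<inter> {i\<in>S. \<theta> i \<le> lo}) \<le> t"
  proof (rule chosen_few_errors[OF finite_S assms(3)])
    show "\<forall>w<last_round. card {j\<in>S. lo < \<theta> j}
        + card {j\<in>S. \<theta> j \<le> lo \<and> \<theta> j + \<phi>/2 \<le> emp_mean r j w} < kept (Suc w)"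
    proof (intro allI impI)
      fix w assume "w < last_round"
      then have "r \<notin> too_many_over B w" using assms(7) by blast
      then have "\<not> real (kept (Suc w)) - real (K + t)
          \<le> real (card {j\<in>S. \<theta> j \<le> lo \<and> \<theta> j + \<phi>/2 \<le> emp_mean r j w})"
        using assms(6) over unfolding too_many_over_def by simp
      then show "card {j\<in>S. lo < \<theta> j}
          + card {j\<in>S. \<theta> j \<le> lo \<and> \<theta> j + \<phi>/2 \<le> emp_mean r j w} < kept (Suc w)"
        using assms(2) by linarith
    qed
    have "r \<notin> too_many_under A" using assms(7) by blast
    then have "\<not> real t \<le> real (card {(w, i)\<in>{..last_round} \<times> A. emp_mean r i w \<le> \<theta> i - \<phi>/2})"
      using assms(6) under unfolding too_many_under_def by simp
    then show "card {(w, i)\<in>{..last_round} \<times> {i\<in>S. hi \<le> \<theta> i}. emp_mean r i w \<le> \<theta> i - \<phi>/2} \<le> t"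
      unfolding A_def by linarith
    have "r \<notin> too_many_over_last B" using assms(7) by blast
    then have "\<not> real t \<le> real (card {j\<in>S. \<theta> j \<le> lo \<and> \<theta> j + \<phi>/2 \<le> emp_mean r j last_round})"
      using assms(6) over unfolding too_many_over_last_def by simp
    then show "card {j\<in>S. \<theta> j \<le> lo \<and> \<theta> j + \<phi>/2 \<le> emp_mean r j last_round} \<le> t"
      by linarith
  qed
  then have "(\<Sum>k=1..K. kth_mean \<theta> S k) - (\<Sum>i\<in>chosen r. \<theta> i) \<le> 2 * real t"
    using card_S_ge mean_in_unit_interval[OF prob_space_arm rewards_in_unit_interval]
    by (intro top_K_regret_le[OF finite_S _ _ chosen_subset card_chosen assms(1,2)]) auto
  then have "aggregate_regret \<theta> S K (chosen r) \<le> 1 / real K * (2 * real t)"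
    unfolding aggregate_regret_def using K_pos by (intro mult_left_mono) auto
  also have "\<dots> = 2 * \<tau>" using \<tau>_K K_pos by (simp add: field_simps)
  finally show ?thesis unfolding top_K_set_def using chosen_subset card_chosen by simp
qed

lemma prob_chosen_top_K_set:
  assumes "\<phi> \<le> kth_mean \<theta> S (K - t) - kth_mean \<theta> S (K + t + 1)"
  shows "1 - \<delta> \<le> measure \<Omega> {r\<in>space \<Omega>. top_K_set \<theta> S K (2 * \<tau>) (chosen r)}"
proof -
  define hi where "hi = kth_mean \<theta> S (K - t)"
  define lo where "lo = kth_mean \<theta> S (K + t + 1)"
  define A where "A = {i\<in>S. hi \<le> \<theta> i}"
  define B where "B = {i\<in>S. \<theta> i \<le> lo}"
  define E where "E = (\<Union>w<last_round. too_many_over B w) \<union> too_many_under A \<union> too_many_over_last B"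
  have gap: "lo + \<phi> \<le> hi" using assms unfolding hi_def lo_def by simp
  have "K - t \<le> card A"
    unfolding A_def hi_def using card_kth_mean_le[OF finite_S] twice_t_le t_pos card_S_ge by simp
  then have A_large: "K \<le> card A + t" by simp
  have "card {i\<in>S. lo < \<theta> i} < K + t + 1"
    unfolding lo_def by (rule card_kth_mean_less[OF finite_S _ card_S_ge]) simp
  then have B_compl_small: "card {i\<in>S. lo < \<theta> i} \<le> K + t" by simp
  have "A \<subseteq> {i\<in>S. lo < \<theta> i}" unfolding A_def using gap \<phi>_pos by auto
  then have "card A \<le> card {i\<in>S. lo < \<theta> i}" using finite_S by (intro card_mono) auto
  then have "card A \<le> 2 * K" using B_compl_small twice_t_le by linarith
  then have E: "E \<in> sets \<Omega>" "measure \<Omega> E \<le> \<delta>"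
    using prob_failure_le[of A B] unfolding A_def B_def E_def by auto
  have "space \<Omega> - E \<subseteq> {r\<in>space \<Omega>. top_K_set \<theta> S K (2 * \<tau>) (chosen r)}"
    using chosen_top_K_set_unless_failure[OF A_large[unfolded A_def] B_compl_small gap]
    unfolding E_def A_def B_def by blast
  then have "measure \<Omega> (space \<Omega> - E) \<le> measure \<Omega> {r\<in>space \<Omega>. top_K_set \<theta> S K (2 * \<tau>) (chosen r)}"
    using chosen_measurable by (intro P.P.finite_measure_mono) auto
  then show ?thesis using P.P.prob_compl[OF E(1)] E(2) by linarith
qed

end

text \<open>The algorithm ignores its internal randomness (the second component of the sample space).\<close>

lemma (in reward_table) measure_bandit_space_ignoring_seed:
  assumes "G \<in> sets \<Omega>"
  shows "measure (bandit_space S D) {(r, u)\<in>space (bandit_space S D). r \<in> G} = measure \<Omega> G"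
proof -
  define U where "U = (\<Pi>\<^sub>M k\<in>(UNIV::nat set). uniform_measure lborel {0..1::real})"
  interpret U: prob_space U unfolding U_def
    by (intro prob_space_PiM prob_space_uniform_measure) auto
  have space: "bandit_space S D = \<Omega> \<Otimes>\<^sub>M U"
    unfolding bandit_space_def PiM_arm_laws_eq U_def ..
  have "{(r, u)\<in>space (bandit_space S D). r \<in> G} = G \<times> space U"
    unfolding space using sets.sets_into_space[OF assms] by (auto simp: space_pair_measure)
  moreover have "emeasure (\<Omega> \<Otimes>\<^sub>M U) (G \<times> space U) = emeasure \<Omega> G"
    using U.emeasure_pair_measure_Times[OF assms sets.top] by (simp add: U.emeasure_space_1)
  ultimately show ?thesis unfolding space by (simp add: measure_def)
qed

lemma halving_guarantee:
  fixes S :: "nat set" and D :: "nat \<Rightarrow> real measure"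
  assumes "finite S"
    and "\<forall>i\<in>S. prob_space (D i) \<and> sets (D i) = sets borel \<and> (AE x in D i. 0 \<le> x \<and> x \<le> 1)"
    and "1 \<le> K" "0 < \<tau>" "\<tau> \<le> 1/2" "\<tau> * real K \<in> \<int>" "(1 + \<tau>) * real K + 1 \<le> real (card S)"
    and "0 < \<phi>" "\<phi> \<le> 1" "0 < \<delta>" "\<delta> \<le> 1/2"
    and gap: "\<phi> \<le> kth_mean (\<lambda>i. mean (D i)) S (nat \<lfloor>(1 - \<tau>) * real K\<rfloor>)
                  - kth_mean (\<lambda>i. mean (D i)) S (nat \<lfloor>(1 + \<tau>) * real K\<rfloor> + 1)"
  defines "N \<equiv> nat \<lfloor>50 * real (card S) / \<phi>\<^sup>2 * (ln (1 / \<tau>) + ln (1 / \<delta>))\<rfloor>"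
  shows "exec (halving.policy S K \<tau> \<phi> \<delta>) r N [] = Some (halving.chosen S K \<tau> \<phi> \<delta> r)"
    and "1 - \<delta> \<le> measure (bandit_space S D) {(r, u)\<in>space (bandit_space S D).
           \<exists>T. exec (halving.policy S K \<tau> \<phi> \<delta>) r N [] = Some T
               \<and> top_K_set (\<lambda>i. mean (D i)) S K (2 * \<tau>) T}"
proof -
  obtain z where z: "\<tau> * real K = of_int z" using assms(6) by (rule Ints_cases)
  moreover have "0 < \<tau> * real K" using assms(3,4) by simp
  ultimately have "0 \<le> z" by simp
  define t where "t = nat z"
  have t: "\<tau> * real K = real t" using z \<open>0 \<le> z\<close> unfolding t_def by simp
  have "\<tau> * real K \<le> real K" using assms(3,5) by simp
  then have "t \<le> K" using t by linarith
  have "(1 - \<tau>) * real K = real (K - t)" "(1 + \<tau>) * real K = real (K + t)"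
    using t \<open>t \<le> K\<close> by (simp_all add: algebra_simps of_nat_diff)
  then have floors: "nat \<lfloor>(1 - \<tau>) * real K\<rfloor> = K - t" "nat \<lfloor>(1 + \<tau>) * real K\<rfloor> = K + t"
    by simp_all
  have "K + t + 1 \<le> card S" using assms(7) \<open>(1 + \<tau>) * real K = real (K + t)\<close> by linarith
  then have "halving_params S K \<tau> \<phi> \<delta> t"
    unfolding halving_params_def using assms(1,3-5,8-11) t by blast
  moreover have "reward_table S D" unfolding reward_table_def using assms(2) by blast
  ultimately interpret halving_bandit S K \<tau> \<phi> \<delta> t D by (rule halving_bandit.intro)
  have N: "N = budget" unfolding N_def budget_def ..
  show exec: "exec policy r N [] = Some (chosen r)" for r
    unfolding N by (rule exec_policy[OF finite_S total_pulls_le_budget])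
  have "1 - \<delta> \<le> measure \<Omega> {r\<in>space \<Omega>. top_K_set \<theta> S K (2 * \<tau>) (chosen r)}"
    using prob_chosen_top_K_set gap unfolding floors by simp
  also have "\<dots> = measure (bandit_space S D) {(r, u)\<in>space (bandit_space S D).
           r \<in> {r\<in>space \<Omega>. top_K_set \<theta> S K (2 * \<tau>) (chosen r)}}"
    by (rule measure_bandit_space_ignoring_seed[OF chosen_measurable, symmetric])
  also have "{(r, u)\<in>space (bandit_space S D). r \<in> {r\<in>space \<Omega>. top_K_set \<theta> S K (2 * \<tau>) (chosen r)}}
      = {(r, u)\<in>space (bandit_space S D).
           \<exists>T. exec policy r N [] = Some T \<and> top_K_set \<theta> S K (2 * \<tau>) T}"
    using exec by (auto simp: space_pair_measure bandit_space_def PiM_arm_laws_eq)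
  finally show "1 - \<delta> \<le> measure (bandit_space S D) {(r, u)\<in>space (bandit_space S D).
           \<exists>T. exec policy r N [] = Some T \<and> top_K_set \<theta> S K (2 * \<tau>) T}" .
qed

theorem lemma3:
  shows "\<exists>C::real. C > 0 \<and>
    (\<exists>A :: nat set \<Rightarrow> nat \<Rightarrow> real \<Rightarrow> real \<Rightarrow> real \<Rightarrow> (nat \<Rightarrow> real) \<Rightarrow> history \<Rightarrow> bandit_action.
      \<forall>(S::nat set) (D::nat \<Rightarrow> real measure) (K::nat) (\<tau>::real) (\<phi>::real) (\<delta>::real).
        finite S \<and>
        (\<forall>i\<in>S. prob_space (D i) \<and> sets (D i) = sets borel \<and> (AE x in D i. 0 \<le> x \<and> x \<le> 1)) \<and>
        K \<ge> 1 \<and> 0 < \<tau> \<and> \<tau> \<le> 1/2 \<and> \<tau> * real K \<in> \<int> \<and>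
        (1 - \<tau>) * real K \<ge> 1 \<and> (1 + \<tau>) * real K + 1 \<le> real (card S) \<and>
        0 < \<phi> \<and> \<phi> \<le> 1 \<and> 0 < \<delta> \<and> \<delta> \<le> 1/2 \<and>
        kth_mean (\<lambda>i. mean (D i)) S (nat \<lfloor>(1 - \<tau>) * real K\<rfloor>)
          - kth_mean (\<lambda>i. mean (D i)) S (nat \<lfloor>(1 + \<tau>) * real K\<rfloor> + 1) \<ge> \<phi>
        \<longrightarrow>
        (let N = nat \<lfloor>C * real (card S) / \<phi>\<^sup>2 * (ln (1 / \<tau>) + ln (1 / \<delta>))\<rfloor> in
          (\<forall>r u. (\<forall>p. 0 \<le> r p \<and> r p \<le> 1) \<longrightarrow>
             (\<exists>T. exec (A S K \<tau> \<phi> \<delta> u) r N [] = Some T)) \<and>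
          measure (bandit_space S D)
            {(r, u) \<in> space (bandit_space S D).
               \<exists>T. exec (A S K \<tau> \<phi> \<delta> u) r N [] = Some T \<and>
                   top_K_set (\<lambda>i. mean (D i)) S K (2 * \<tau>) T} \<ge> 1 - \<delta>))"
proof (intro exI[of _ "50::real"] conjI
    exI[of _ "\<lambda>S K \<tau> \<phi> \<delta> _. halving.policy S K \<tau> \<phi> \<delta>"] allI impI)
  show "(0::real) < 50" by simp
qed (elim conjE, unfold Let_def, intro conjI allI impI exI; (rule halving_guarantee; assumption))

end
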